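(* Let $\mathfrak F=(X,\parallel,Y,S_\vee)$ be a frame satisfying axioms (F0)–(F4). Then for every family $(A_j)_{j\in J}$ of stable sets, $\overline\eta_S\big(\bigvee_{j\in J}A_j\big)=\bigvee_{j\in J}\overline\eta_S(A_j)$, where the left join is taken in $\mathcal G(X)$ and the right join in $\mathcal G(Y)$.
   Context: A polarity is $(X,\parallel,Y)$ with $X,Y$ nonempty sets and ${\parallel}\subseteq X\times Y$; $I=(X\times Y)\setminus{\parallel}$. For $U\subseteq X$, $U'=\{y\in Y:\forall x\in U\;x\parallel y\}$; for $V\subseteq Y$, $V'=\{x\in X:\forall y\in V\;x\parallel y\}$. $A\subseteq X$ is stable if $A=A''$; $B\subseteq Y$ is co-stable if $B=B''$; $\mathcal G(X),\mathcal G(Y)$ are the complete lattices of stable/co-stable sets (meets = intersections, joins $\bigvee_jA_j=(\bigcup_jA_j)''$). Preorders: $x\preceq z$ iff $\{x\}'\subseteq\{z\}'$ on $X$; $y\preceq v$ iff $\{y\}'\subseteq\{v\}'$ on $Y$; separated means both are partial orders ($\leq$). $\Gamma u=\{w:u\preceq w\}$. Closed elements: sets $\Gamma x$ in $\mathcal G(X)$, $\Gamma y$ in $\mathcal G(Y)$. A frame is $(X,\parallel,Y,S_\vee)$ with $S_\vee\subseteq Y\times X$; $S_\vee x=\{y:yS_\vee x\}$, $yS_\vee=\{x:yS_\vee x\}$; $zS'_\vee x$ iff $\forall y(yS_\vee x\Rightarrow z\parallel y)$. Axioms: (F0) $\forall x\exists y\;xIy$, $\forall y\exists x\;xIy$;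 (F1) separated; (F2) each $S_\vee x$ is a closed element of $\mathcal G(Y)$; (F3) each $yS_\vee$ is a down-set; (F4) for each $x$, $\{z:zS'_\vee x\}\in\mathcal G(X)$ and for each $z$, $\{x:zS'_\vee x\}\in\mathcal G(X)$. For $A\in\mathcal G(X)$, $\overline\eta_S(A)=(\bigcup_{x\in A}S_\vee x)''$. *)

theory Defs
  imports Main
begin

text \<open>Polarity (X, par, Y): par x y means x \<parallel> y. Relation data outside X, Y is ignored.\<close>

definition primeX :: "'x set \<Rightarrow> ('x \<Rightarrow> 'y \<Rightarrow> bool) \<Rightarrow> 'y set \<Rightarrow> 'x set \<Rightarrow> 'y set" where
  "primeX X par Y U = {y \<in> Y. \<forall>x\<in>U. par x y}"

definition primeY :: "'x set \<Rightarrow> ('x \<Rightarrow> 'y \<Rightarrow> bool) \<Rightarrow> 'y set \<Rightarrow> 'y set \<Rightarrow> 'x set" where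
  "primeY X par Y V = {x \<in> X. \<forall>y\<in>V. par x y}"

definition stable :: "'x set \<Rightarrow> ('x \<Rightarrow> 'y \<Rightarrow> bool) \<Rightarrow> 'y set \<Rightarrow> 'x set \<Rightarrow> bool" where
  "stable X par Y A \<longleftrightarrow> A \<subseteq> X \<and> A = primeY X par Y (primeX X par Y A)"

definition costable :: "'x set \<Rightarrow> ('x \<Rightarrow> 'y \<Rightarrow> bool) \<Rightarrow> 'y set \<Rightarrow> 'y set \<Rightarrow> bool" where
  "costable X par Y B \<longleftrightarrow> B \<subseteq> Y \<and> B = primeX X par Y (primeY X par Y B)"

definition joinX :: "'x set \<Rightarrow> ('x \<Rightarrow> 'y \<Rightarrow> bool) \<Rightarrow> 'y set \<Rightarrow> 'j set \<Rightarrow> ('j \<Rightarrow> 'x set) \<Rightarrow> 'x set" where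
  "joinX X par Y J A = primeY X par Y (primeX X par Y (\<Union>j\<in>J. A j))"

definition joinY :: "'x set \<Rightarrow> ('x \<Rightarrow> 'y \<Rightarrow> bool) \<Rightarrow> 'y set \<Rightarrow> 'j set \<Rightarrow> ('j \<Rightarrow> 'y set) \<Rightarrow> 'y set" where
  "joinY X par Y J B = primeX X par Y (primeY X par Y (\<Union>j\<in>J. B j))"

definition leX :: "'x set \<Rightarrow> ('x \<Rightarrow> 'y \<Rightarrow> bool) \<Rightarrow> 'y set \<Rightarrow> 'x \<Rightarrow> 'x \<Rightarrow> bool" where
  "leX X par Y x z \<longleftrightarrow> primeX X par Y {x} \<subseteq> primeX X par Y {z}"

definition leY :: "'x set \<Rightarrow> ('x \<Rightarrow> 'y \<Rightarrow> bool) \<Rightarrow> 'y set \<Rightarrow> 'y \<Rightarrow> 'y \<Rightarrow> bool" where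
  "leY X par Y y v \<longleftrightarrow> primeY X par Y {y} \<subseteq> primeY X par Y {v}"

definition GammaX :: "'x set \<Rightarrow> ('x \<Rightarrow> 'y \<Rightarrow> bool) \<Rightarrow> 'y set \<Rightarrow> 'x \<Rightarrow> 'x set" where
  "GammaX X par Y x = {w \<in> X. leX X par Y x w}"

definition GammaY :: "'x set \<Rightarrow> ('x \<Rightarrow> 'y \<Rightarrow> bool) \<Rightarrow> 'y set \<Rightarrow> 'y \<Rightarrow> 'y set" where
  "GammaY X par Y y = {w \<in> Y. leY X par Y y w}"

definition closedY :: "'x set \<Rightarrow> ('x \<Rightarrow> 'y \<Rightarrow> bool) \<Rightarrow> 'y set \<Rightarrow> 'y set \<Rightarrow> bool" where
  "closedY X par Y B \<longleftrightarrow> (\<exists>y\<in>Y. B = GammaY X par Y y)"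

definition Sx :: "'y set \<Rightarrow> ('y \<Rightarrow> 'x \<Rightarrow> bool) \<Rightarrow> 'x \<Rightarrow> 'y set" where
  "Sx Y S x = {y \<in> Y. S y x}"

definition Sprime :: "('x \<Rightarrow> 'y \<Rightarrow> bool) \<Rightarrow> 'y set \<Rightarrow> ('y \<Rightarrow> 'x \<Rightarrow> bool) \<Rightarrow> 'x \<Rightarrow> 'x \<Rightarrow> bool" where
  "Sprime par Y S z x \<longleftrightarrow> (\<forall>y\<in>Y. S y x \<longrightarrow> par z y)"

definition frame :: "'x set \<Rightarrow> ('x \<Rightarrow> 'y \<Rightarrow> bool) \<Rightarrow> 'y set \<Rightarrow> ('y \<Rightarrow> 'x \<Rightarrow> bool) \<Rightarrow> bool" where
  "frame X par Y S \<longleftrightarrow>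
     X \<noteq> {} \<and> Y \<noteq> {} \<and> (\<forall>y x. S y x \<longrightarrow> y \<in> Y \<and> x \<in> X) \<and>
     \<comment> \<open>(F0)\<close>
     (\<forall>x\<in>X. \<exists>y\<in>Y. \<not> par x y) \<and> (\<forall>y\<in>Y. \<exists>x\<in>X. \<not> par x y) \<and>
     \<comment> \<open>(F1) separated\<close>
     (\<forall>x\<in>X. \<forall>z\<in>X. leX X par Y x z \<and> leX X par Y z x \<longrightarrow> x = z) \<and>
     (\<forall>y\<in>Y. \<forall>v\<in>Y. leY X par Y y v \<and> leY X par Y v y \<longrightarrow> y = v) \<and>
     \<comment> \<open>(F2)\<close>
     (\<forall>x\<in>X. closedY X par Y (Sx Y S x)) \<and>
     \<comment> \<open>(F3) each y S is a down-set of X\<close>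
     (\<forall>y\<in>Y. \<forall>x\<in>X. \<forall>z\<in>X. leX X par Y x z \<and> S y z \<longrightarrow> S y x) \<and>
     \<comment> \<open>(F4)\<close>
     (\<forall>x\<in>X. stable X par Y {z \<in> X. Sprime par Y S z x}) \<and>
     (\<forall>z\<in>X. stable X par Y {x \<in> X. Sprime par Y S z x})"

definition etaS :: "'x set \<Rightarrow> ('x \<Rightarrow> 'y \<Rightarrow> bool) \<Rightarrow> 'y set \<Rightarrow> ('y \<Rightarrow> 'x \<Rightarrow> bool) \<Rightarrow> 'x set \<Rightarrow> 'y set" where
  "etaS X par Y S A = primeX X par Y (primeY X par Y (\<Union>x\<in>A. Sx Y S x))"

end

theory Submission
  imports Defs
begin

text \<open>By (F4), for every z the set of x with z S' x is stable, so it contains the stable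
  closure of each of its subsets. Hence if z is parallel to S x for all x in U, it is parallel to
  S x for all x in U'' as well: the map \<open>\<overline>\<eta>\<^sub>S\<close> cannot distinguish U from U''. As
  \<open>\<overline>\<eta>\<^sub>S\<close> is the closure of a union, it therefore sends the join of the \<open>A\<^sub>j\<close>, the closure
  of their union, to the closure of the union of all S x with x in some \<open>A\<^sub>j\<close>, which is the join of
  the \<open>\<overline>\<eta>\<^sub>S(A\<^sub>j)\<close>.\<close>

abbreviation closureX :: "'x set \<Rightarrow> ('x \<Rightarrow> 'y \<Rightarrow> bool) \<Rightarrow> 'y set \<Rightarrow> 'x set \<Rightarrow> 'x set" where
  "closureX X par Y U \<equiv> primeY X par Y (primeX X par Y U)"

abbreviation closureY :: "'x set \<Rightarrow> ('x \<Rightarrow> 'y \<Rightarrow> bool) \<Rightarrow> 'y set \<Rightarrow> 'y set \<Rightarrow> 'y set" where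
  "closureY X par Y V \<equiv> primeX X par Y (primeY X par Y V)"

lemma primeX_antimono: "U \<subseteq> U' \<Longrightarrow> primeX X par Y U' \<subseteq> primeX X par Y U"
  unfolding primeX_def by auto

lemma primeY_antimono: "V \<subseteq> V' \<Longrightarrow> primeY X par Y V' \<subseteq> primeY X par Y V"
  unfolding primeY_def by auto

lemma primeX_subset: "primeX X par Y U \<subseteq> Y"
  unfolding primeX_def by auto

lemma primeY_subset: "primeY X par Y V \<subseteq> X"
  unfolding primeY_def by auto

lemma subset_closureX: "U \<subseteq> X \<Longrightarrow> U \<subseteq> closureX X par Y U"
  unfolding primeX_def primeY_def by auto

lemma subset_closureY: "V \<subseteq> Y \<Longrightarrow> V \<subseteq> closureY X par Y V"
  unfolding primeX_def primeY_def by auto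

lemma closureY_mono: "V \<subseteq> V' \<Longrightarrow> closureY X par Y V \<subseteq> closureY X par Y V'"
  by (intro primeX_antimono primeY_antimono)

lemma closureY_idem: "closureY X par Y (closureY X par Y V) = closureY X par Y V"
proof
  show "closureY X par Y (closureY X par Y V) \<subseteq> closureY X par Y V"
    by (intro primeX_antimono subset_closureX primeY_subset)
  show "closureY X par Y V \<subseteq> closureY X par Y (closureY X par Y V)"
    by (intro subset_closureY primeX_subset)
qed

lemma closureY_least:
  assumes "V \<subseteq> closureY X par Y W"
  shows "closureY X par Y V \<subseteq> closureY X par Y W"
proof -
  have "closureY X par Y V \<subseteq> closureY X par Y (closureY X par Y W)"
    by (rule closureY_mono[OF assms])
  then show ?thesis by (simp only: closureY_idem)
qed

lemma closureY_UN_closureY: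
  assumes "\<forall>j\<in>J. B j \<subseteq> Y"
  shows "closureY X par Y (\<Union>j\<in>J. closureY X par Y (B j)) = closureY X par Y (\<Union>j\<in>J. B j)"
proof
  show "closureY X par Y (\<Union>j\<in>J. closureY X par Y (B j)) \<subseteq> closureY X par Y (\<Union>j\<in>J. B j)"
    by (rule closureY_least, rule UN_least, rule closureY_mono) blast
  have "B j \<subseteq> closureY X par Y (B j)" if "j \<in> J" for j
    using assms that by (simp add: subset_closureY)
  then show "closureY X par Y (\<Union>j\<in>J. B j) \<subseteq> closureY X par Y (\<Union>j\<in>J. closureY X par Y (B j))"
    by (intro closureY_mono UN_mono) simp_all
qed

lemma stable_closureX_least:
  assumes "stable X par Y B" and "U \<subseteq> B"
  shows "closureX X par Y U \<subseteq> B"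
proof -
  have "closureX X par Y U \<subseteq> closureX X par Y B"
    using assms(2) by (intro primeY_antimono primeX_antimono)
  also have "\<dots> = B"
    using assms(1) unfolding stable_def by simp
  finally show ?thesis .
qed

lemma primeY_UN_Sx_iff:
  "z \<in> primeY X par Y (\<Union>x\<in>U. Sx Y S x) \<longleftrightarrow> z \<in> X \<and> (\<forall>x\<in>U. Sprime par Y S z x)"
  unfolding primeY_def Sx_def Sprime_def by auto

lemma etaS_closureX:
  assumes F4: "\<forall>z\<in>X. stable X par Y {x \<in> X. Sprime par Y S z x}"
    and "U \<subseteq> X"
  shows "etaS X par Y S (closureX X par Y U) = etaS X par Y S U"
proof
  show "etaS X par Y S (closureX X par Y U) \<subseteq> etaS X par Y S U"
    unfolding etaS_def
  proof (intro closureY_least subsetI)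
    fix y assume "y \<in> (\<Union>x\<in>closureX X par Y U. Sx Y S x)"
    then obtain x where x: "x \<in> closureX X par Y U" and y: "y \<in> Sx Y S x" by blast
    have "par z y" if z: "z \<in> primeY X par Y (\<Union>x\<in>U. Sx Y S x)" for z
    proof -
      have "z \<in> X" and "U \<subseteq> {x \<in> X. Sprime par Y S z x}"
        using z \<open>U \<subseteq> X\<close> by (auto simp: primeY_UN_Sx_iff)
      then have "Sprime par Y S z x"
        using stable_closureX_least F4 x by blast
      then show ?thesis
        using y unfolding Sprime_def Sx_def by simp
    qed
    moreover have "y \<in> Y" using y unfolding Sx_def by simp
    ultimately show "y \<in> closureY X par Y (\<Union>x\<in>U. Sx Y S x)"
      unfolding primeX_def by blast
  qed
  show "etaS X par Y S U \<subseteq> etaS X par Y S (closureX X par Y U)"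
    unfolding etaS_def using subset_closureX[OF \<open>U \<subseteq> X\<close>, of par Y]
    by (intro closureY_mono) blast
qed

theorem proposition3p11:
  fixes X :: "'x set" and Y :: "'y set" and par :: "'x \<Rightarrow> 'y \<Rightarrow> bool"
    and S :: "'y \<Rightarrow> 'x \<Rightarrow> bool" and J :: "'j set" and A :: "'j \<Rightarrow> 'x set"
  assumes "frame X par Y S"
    and "\<forall>j\<in>J. stable X par Y (A j)"
  shows "etaS X par Y S (joinX X par Y J A) = joinY X par Y J (\<lambda>j. etaS X par Y S (A j))"
proof -
  have F4: "\<forall>z\<in>X. stable X par Y {x \<in> X. Sprime par Y S z x}"
    using assms(1) unfolding frame_def by (elim conjE) assumption
  have "(\<Union>j\<in>J. A j) \<subseteq> X"
    using assms(2) unfolding stable_def by blast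
  then have "etaS X par Y S (joinX X par Y J A) = etaS X par Y S (\<Union>j\<in>J. A j)"
    unfolding joinX_def by (rule etaS_closureX[OF F4])
  also have "\<dots> = closureY X par Y (\<Union>j\<in>J. \<Union>x\<in>A j. Sx Y S x)"
    unfolding etaS_def by (simp only: UN_UN_flatten)
  also have "\<dots> = joinY X par Y J (\<lambda>j. etaS X par Y S (A j))"
    unfolding joinY_def etaS_def
    by (rule closureY_UN_closureY[symmetric]) (auto simp: Sx_def)
  finally show ?thesis .
qed

end
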